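(* Let $X_1$ be a random variable with $\mathbb EX_1=0$, $\operatorname{Var}X_1=1$, such that $\varphi(t)=\log\mathbb Ee^{tX_1}<\infty$ for all $t\geq-\sigma_0$ for some $\sigma_0>0$, and let $I(s)=\sup_{t\geq0}(st-\varphi(t))$, $s\geq0$. Let $m_*>1$. The following are equivalent: (a) there is $t_*>0$ with $\frac{\varphi(t_* )}{t_*^2/2}=m_*$ and for every $\varepsilon>0$, $\sup_{0<t<t_*-\varepsilon}\frac{\varphi(t)}{t^2/2}<m_*$ and $\sup_{t>t_*+\varepsilon}\frac{\varphi(t)}{t^2/2}<m_*$; (b) there is $s_*>0$ with $\frac{I(s_* )}{s_*^2/2}=\frac1{m_*}$ and for every $\varepsilon>0$, $\inf_{0<s<s_*-\varepsilon}\frac{I(s)}{s^2/2}>\frac1{m_*}$ and $\inf_{s>s_*+\varepsilon}\frac{I(s)}{s^2/2}>\frac1{m_*}$. Moreover, if these hold, then $\varphi(t_* )=I(s_* )=s_*t_*/2$, $s_*=\varphi'(t_* )=t_*m_*$, $t_*=I'(s_* )=s_*/m_*$, and $I''(s_* )\varphi''(t_* )=1$. *)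

theory Defs
  imports "HOL-Probability.Probability"
begin

definition cgf :: "'a measure \<Rightarrow> ('a \<Rightarrow> real) \<Rightarrow> real \<Rightarrow> real" where
  "cgf M X t = ln (integral\<^sup>L M (\<lambda>x. exp (t * X x)))"

text \<open>Rate function I(s) = sup over t >= 0 of (s t - phi(t)); extended-real valued
  since it may be infinite.\<close>
definition rate :: "'a measure \<Rightarrow> ('a \<Rightarrow> real) \<Rightarrow> real \<Rightarrow> ereal" where
  "rate M X s = (SUP t\<in>{0::real..}. ereal (s * t - cgf M X t))"

definition cond_a :: "(real \<Rightarrow> real) \<Rightarrow> real \<Rightarrow> real \<Rightarrow> bool" where
  "cond_a \<phi> m ts \<longleftrightarrow> ts > 0 \<and> \<phi> ts / (ts^2/2) = m \<and>
     (\<forall>\<epsilon>>0. (SUP t\<in>{0<..<ts-\<epsilon>}. ereal (\<phi> t / (t^2/2))) < ereal m \<and>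
             (SUP t\<in>{ts+\<epsilon><..}. ereal (\<phi> t / (t^2/2))) < ereal m)"

definition cond_b :: "(real \<Rightarrow> ereal) \<Rightarrow> real \<Rightarrow> real \<Rightarrow> bool" where
  "cond_b I m ss \<longleftrightarrow> ss > 0 \<and> I ss / ereal (ss^2/2) = ereal (1/m) \<and>
     (\<forall>\<epsilon>>0. (INF s\<in>{0<..<ss-\<epsilon>}. I s / ereal (s^2/2)) > ereal (1/m) \<and>
             (INF s\<in>{ss+\<epsilon><..}. I s / ereal (s^2/2)) > ereal (1/m))"

end

theory Submission
  imports Defs
begin

text \<open>
  The cumulant generating function \<open>\<phi>\<close> is smooth and strictly convex on \<open>(-\<sigma>\<^sub>0, \<infinity>)\<close>
  with \<open>\<phi>(0) = \<phi>'(0) = 0\<close>, so the supremum defining \<open>I(\<phi>'(\<tau>))\<close> is attained at \<open>\<tau>\<close>: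
  \<open>I(\<phi>'(\<tau>)) = \<tau> \<phi>'(\<tau>) - \<phi>(\<tau>)\<close>.

  (a) \<open>\<Rightarrow>\<close> (b): (a) says \<open>\<phi>(t) \<le> m t\<^sup>2/2\<close> with contact only at \<open>t\<^sub>*\<close>, so \<open>\<phi>'(t\<^sub>*) = m t\<^sub>*\<close>
  and \<open>I(m t\<^sub>*) = m t\<^sub>*\<^sup>2/2\<close>. Testing the supremum at \<open>t = s/m\<close> gives
  \<open>I(s)/(s\<^sup>2/2) \<ge> (2 - c/m)/m\<close> whenever \<open>\<phi>(s/m)/((s/m)\<^sup>2/2) \<le> c\<close>, which turns a gap
  \<open>c < m\<close> for the ratio of \<open>\<phi>\<close> into a gap above \<open>1/m\<close> for the ratio of \<open>I\<close>.

  (b) \<open>\<Rightarrow>\<close> (a): if \<open>I(u) \<ge> k u\<^sup>2/2\<close> at \<open>u = \<phi>'(t)\<close>, then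
  \<open>\<phi>(t) = t u - I(u) \<le> t u - k u\<^sup>2/2 \<le> t\<^sup>2/(2k)\<close>, and \<open>\<phi>'\<close> maps neighbourhoods of \<open>s\<^sub>*/m\<close>
  monotonically onto neighbourhoods of \<open>s\<^sub>*\<close>.

  Near \<open>s\<^sub>*\<close>, \<open>I(s) = s \<tau>(s) - \<phi>(\<tau>(s))\<close> with \<open>\<tau> = (\<phi>')\<^sup>-\<^sup>1\<close>, so \<open>I' = \<tau>\<close> and
  \<open>I'' = 1/\<phi>''(\<tau>)\<close> by the inverse function theorem.
\<close>

section \<open>Differentiation under the integral sign\<close>

lemma MVT_difference_quotient:
  fixes f f' :: "real \<Rightarrow> real"
  assumes der: "\<And>t. t \<in> {a..b} \<Longrightarrow> (f has_real_derivative f' t) (at t)"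
    and xy: "x \<in> {a..b}" "y \<in> {a..b}" "x \<noteq> y"
  shows "\<exists>z\<in>{a..b}. (f y - f x) / (y - x) = f' z"
proof -
  have *: "\<exists>z\<in>{a..b}. (f v - f u) / (v - u) = f' z"
    if "u < v" "u \<in> {a..b}" "v \<in> {a..b}" for u v
  proof -
    have "(f has_real_derivative f' t) (at t)" if "u \<le> t" "t \<le> v" for t
      using der \<open>u \<in> {a..b}\<close> \<open>v \<in> {a..b}\<close> that by auto
    then obtain z where "u < z" "z < v" "f v - f u = (v - u) * f' z"
      using MVT2[of u v f f'] \<open>u < v\<close> by blast
    then show ?thesis using that by (intro bexI[of _ z]) auto
  qed
  show ?thesis
  proof (cases "x < y")
    case True
    then show ?thesis using *[of x y] xy by blast
  next
    case False
    then have "y < x" using xy(3) by simp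
    then obtain z where "z \<in> {a..b}" "(f x - f y) / (x - y) = f' z"
      using *[of y x] xy by blast
    moreover have "(f y - f x) / (y - x) = (f x - f y) / (x - y)"
      using minus_divide_divide[of "f x - f y" "x - y"] by simp
    ultimately show ?thesis by auto
  qed
qed

context
  fixes f g :: "real \<Rightarrow> 'a \<Rightarrow> real" and M :: "'a measure" and G :: "'a \<Rightarrow> real"
    and t0 \<delta> :: real
  assumes \<delta>: "\<delta> > 0"
    and integrable_f: "\<And>t. t \<in> {t0-\<delta>..t0+\<delta>} \<Longrightarrow> integrable M (f t)"
    and g_measurable: "g t0 \<in> borel_measurable M"
    and integrable_G: "integrable M G"
    and der: "\<And>x t. t \<in> {t0-\<delta>..t0+\<delta>} \<Longrightarrow> ((\<lambda>t. f t x) has_real_derivative g t x) (at t)"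
    and dominated: "\<And>x t. t \<in> {t0-\<delta>..t0+\<delta>} \<Longrightarrow> \<bar>g t x\<bar> \<le> G x"
begin

lemma integral_difference_quotients_tendsto:
  assumes Y: "\<And>i. Y i \<in> {t0-\<delta>..t0+\<delta>} - {t0}" and Y_lim: "Y \<longlonglongrightarrow> t0"
  shows "(\<lambda>i. \<integral>x. (f (Y i) x - f t0 x) / (Y i - t0) \<partial>M) \<longlonglongrightarrow> (\<integral>x. g t0 x \<partial>M)"
proof (rule integral_dominated_convergence[where w=G])
  have t0: "t0 \<in> {t0-\<delta>..t0+\<delta>}" using \<delta> by simp
  show "(\<lambda>x. (f (Y i) x - f t0 x) / (Y i - t0)) \<in> borel_measurable M" for i
  proof -
    have "Y i \<in> {t0-\<delta>..t0+\<delta>}" using Y[of i] by simp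
    then show ?thesis using integrable_f[OF t0] integrable_f[of "Y i"] by measurable
  qed
  show "AE x in M. (\<lambda>i. (f (Y i) x - f t0 x) / (Y i - t0)) \<longlonglongrightarrow> g t0 x"
  proof (rule AE_I2)
    fix x
    have "((\<lambda>y. (f y x - f t0 x) / (y - t0)) \<longlongrightarrow> g t0 x) (at t0)"
      using der[OF t0, of x] unfolding has_field_derivative_iff .
    then have "((\<lambda>y. (f y x - f t0 x) / (y - t0)) \<circ> Y) \<longlonglongrightarrow> g t0 x"
      unfolding tendsto_at_iff_sequentially using Y Y_lim by blast
    then show "(\<lambda>i. (f (Y i) x - f t0 x) / (Y i - t0)) \<longlonglongrightarrow> g t0 x" by (simp add: o_def)
  qed
  show "AE x in M. norm ((f (Y i) x - f t0 x) / (Y i - t0)) \<le> G x" for i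
  proof (rule AE_I2)
    fix x
    obtain z where "z \<in> {t0-\<delta>..t0+\<delta>}" "(f (Y i) x - f t0 x) / (Y i - t0) = g z x"
      using MVT_difference_quotient[of "t0-\<delta>" "t0+\<delta>" "\<lambda>t. f t x" "\<lambda>t. g t x" t0 "Y i"]
        der t0 Y[of i] by blast
    then show "norm ((f (Y i) x - f t0 x) / (Y i - t0)) \<le> G x" using dominated by auto
  qed
qed (use g_measurable integrable_G in auto)

lemma has_real_derivative_integral:
  "((\<lambda>t. \<integral>x. f t x \<partial>M) has_real_derivative (\<integral>x. g t0 x \<partial>M)) (at t0)"
proof -
  let ?F = "\<lambda>t. \<integral>x. f t x \<partial>M"
  let ?S = "{t0-\<delta><..<t0+\<delta>}"
  have "((\<lambda>y. (?F y - ?F t0) / (y - t0)) \<longlongrightarrow> (\<integral>x. g t0 x \<partial>M)) (at t0 within ?S)"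
    unfolding tendsto_at_iff_sequentially
  proof (intro allI impI)
    fix Y :: "nat \<Rightarrow> real" assume Y: "\<forall>i. Y i \<in> ?S - {t0}" and Y_lim: "Y \<longlonglongrightarrow> t0"
    have Y_in: "Y i \<in> {t0-\<delta>..t0+\<delta>} - {t0}" for i using Y[rule_format, of i] by auto
    have "(\<lambda>y. (?F y - ?F t0) / (y - t0)) \<circ> Y = (\<lambda>i. \<integral>x. (f (Y i) x - f t0 x) / (Y i - t0) \<partial>M)"
    proof
      fix i
      have "Y i \<in> {t0-\<delta>..t0+\<delta>}" "t0 \<in> {t0-\<delta>..t0+\<delta>}" using Y_in[of i] \<delta> by auto
      then show "((\<lambda>y. (?F y - ?F t0) / (y - t0)) \<circ> Y) i = (\<integral>x. (f (Y i) x - f t0 x) / (Y i - t0) \<partial>M)"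
        using integrable_f by simp
    qed
    then show "((\<lambda>y. (?F y - ?F t0) / (y - t0)) \<circ> Y) \<longlonglongrightarrow> (\<integral>x. g t0 x \<partial>M)"
      using integral_difference_quotients_tendsto[OF Y_in Y_lim] by simp
  qed
  then have "((\<lambda>y. (?F y - ?F t0) / (y - t0)) \<longlongrightarrow> (\<integral>x. g t0 x \<partial>M)) (at t0)"
    using \<delta> by (subst (asm) tendsto_within_open) auto
  then show ?thesis unfolding has_field_derivative_iff .
qed

end

section \<open>The one-sided Legendre transform\<close>

definition legendre :: "(real \<Rightarrow> real) \<Rightarrow> real \<Rightarrow> ereal" where
  "legendre \<phi> s = (SUP t\<in>{0::real..}. ereal (s * t - \<phi> t))"

lemma rate_eq_legendre: "rate M X = legendre (cgf M X)"
  by (rule ext) (simp add: rate_def legendre_def)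

lemma legendre_lower_bound: "t \<ge> 0 \<Longrightarrow> ereal (s * t - \<phi> t) \<le> legendre \<phi> s"
  unfolding legendre_def by (rule SUP_upper) auto

lemma legendre_ratio_lower_bound:
  assumes s: "s > 0" and m: "m > 0" and le: "\<phi> (s/m) \<le> c * (s/m)^2 / 2"
  shows "ereal ((2 - c/m) / m) \<le> legendre \<phi> s / ereal (s^2/2)"
proof -
  have "s^2/2 * ((2 - c/m) / m) = s * (s/m) - c * (s/m)^2 / 2"
    using m by (simp add: field_simps power2_eq_square)
  also have "\<dots> \<le> s * (s/m) - \<phi> (s/m)" using le by linarith
  finally have "ereal (s^2/2 * ((2 - c/m) / m)) \<le> ereal (s * (s/m) - \<phi> (s/m))" by simp
  also have "\<dots> \<le> legendre \<phi> s" using s m by (intro legendre_lower_bound) simp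
  finally show ?thesis using s by (subst ereal_le_divide_pos) auto
qed

lemma point_in_gap_region:
  fixes x y :: real assumes "y > 0" "y \<noteq> x"
  shows "\<exists>\<epsilon>>0. y \<in> {0<..<x-\<epsilon>} \<or> y \<in> {x+\<epsilon><..}"
proof (cases "y < x")
  case True
  then show ?thesis using assms by (intro exI[of _ "(x - y)/2"]) (auto simp: field_simps)
next
  case False
  then show ?thesis using assms by (intro exI[of _ "(y - x)/2"]) (auto simp: field_simps)
qed

lemma cond_a_touching_point:
  assumes "cond_a \<phi> m ts"
  shows "ts > 0" "\<phi> ts = m * ts^2 / 2"
  using assms unfolding cond_a_def by (auto simp: field_simps)

lemma cond_a_less:
  assumes "cond_a \<phi> m ts" "t > 0" "t \<noteq> ts"
  shows "\<phi> t < m * t^2 / 2"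
proof -
  obtain \<epsilon> where \<epsilon>: "\<epsilon> > 0" and t: "t \<in> {0<..<ts-\<epsilon>} \<or> t \<in> {ts+\<epsilon><..}"
    using point_in_gap_region assms(2,3) by blast
  have gap: "(SUP t\<in>{0<..<ts-\<epsilon>}. ereal (\<phi> t / (t^2/2))) < ereal m"
      "(SUP t\<in>{ts+\<epsilon><..}. ereal (\<phi> t / (t^2/2))) < ereal m"
    using assms(1) \<epsilon> unfolding cond_a_def by blast+
  have "ereal (\<phi> t / (t^2/2)) < ereal m"
    using t
  proof
    assume "t \<in> {0<..<ts-\<epsilon>}"
    from le_less_trans[OF SUP_upper[OF this] gap(1)] show ?thesis .
  next
    assume "t \<in> {ts+\<epsilon><..}"
    from le_less_trans[OF SUP_upper[OF this] gap(2)] show ?thesis .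
  qed
  then show ?thesis using assms(2) by (simp add: divide_less_eq)
qed

lemma cond_a_le:
  assumes "cond_a \<phi> m ts" "t > 0"
  shows "\<phi> t \<le> m * t^2 / 2"
proof (cases "t = ts")
  case True
  then show ?thesis using assms unfolding cond_a_def by (simp add: field_simps)
qed (use cond_a_less[OF assms] in auto)

lemma cond_b_greater:
  assumes "cond_b I m ss" "u > 0" "u \<noteq> ss"
  shows "ereal (1/m) < I u / ereal (u^2/2)"
proof -
  obtain \<epsilon> where \<epsilon>: "\<epsilon> > 0" and u: "u \<in> {0<..<ss-\<epsilon>} \<or> u \<in> {ss+\<epsilon><..}"
    using point_in_gap_region assms(2,3) by blast
  then show ?thesis
    using assms(1) unfolding cond_b_def by (auto intro: less_le_trans[OF _ INF_lower])
qed

lemma cond_b_ge: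
  assumes "cond_b I m ss" "u > 0"
  shows "ereal (1/m) \<le> I u / ereal (u^2/2)"
  using assms cond_b_greater[OF assms] unfolding cond_b_def by (cases "u = ss") auto

lemma legendre_ratio_gap:
  assumes m: "m > 0"
    and gap: "(SUP t\<in>A. ereal (\<phi> t / (t^2/2))) < ereal m"
    and B: "\<And>s. s \<in> B \<Longrightarrow> s > 0 \<and> s/m \<in> A"
  shows "ereal (1/m) < (INF s\<in>B. legendre \<phi> s / ereal (s^2/2))"
proof -
  obtain c where c: "(SUP t\<in>A. ereal (\<phi> t / (t^2/2))) < ereal c" "c < m"
    using ereal_dense2[OF gap] by auto
  have "ereal (1/m) < ereal ((2 - c/m) / m)"
    using m c(2) by (simp add: divide_simps)
  also have "\<dots> \<le> (INF s\<in>B. legendre \<phi> s / ereal (s^2/2))"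
  proof (rule INF_greatest)
    fix s assume "s \<in> B"
    then have s: "s > 0" "s/m \<in> A" using B by auto
    have "ereal (\<phi> (s/m) / ((s/m)^2/2)) < ereal c"
      using le_less_trans[OF SUP_upper[OF s(2)] c(1)] .
    then have "\<phi> (s/m) \<le> c * (s/m)^2 / 2" using s m by (simp add: divide_less_eq)
    then show "ereal ((2 - c/m) / m) \<le> legendre \<phi> s / ereal (s^2/2)"
      using legendre_ratio_lower_bound s(1) m by blast
  qed
  finally show ?thesis .
qed

section \<open>Duality for a smooth strictly convex function\<close>

locale convex_cgf =
  fixes \<phi> \<phi>' \<phi>'' :: "real \<Rightarrow> real" and \<sigma> :: real
  assumes \<sigma>_pos: "\<sigma> > 0"
    and has_deriv: "\<And>t. t > -\<sigma> \<Longrightarrow> (\<phi> has_real_derivative \<phi>' t) (at t)"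
    and has_second_deriv: "\<And>t. t > -\<sigma> \<Longrightarrow> (\<phi>' has_real_derivative \<phi>'' t) (at t)"
    and second_deriv_pos: "\<And>t. t > -\<sigma> \<Longrightarrow> \<phi>'' t > 0"
    and value_0: "\<phi> 0 = 0"
    and deriv_0: "\<phi>' 0 = 0"
begin

lemma deriv_less:
  assumes "-\<sigma> < a" "a < b"
  shows "\<phi>' a < \<phi>' b"
proof -
  obtain z where z: "a < z" "z < b" "\<phi>' b - \<phi>' a = (b - a) * \<phi>'' z"
    using MVT2[of a b \<phi>' \<phi>''] has_second_deriv assms by force
  have "\<phi>'' z > 0" using second_deriv_pos z assms by auto
  then have "(b - a) * \<phi>'' z > 0" using assms by simp
  with z show ?thesis by linarith
qed

lemma deriv_pos: "t > 0 \<Longrightarrow> \<phi>' t > 0"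
  using deriv_less[of 0 t] \<sigma>_pos deriv_0 by auto

lemma strict_mono_on_deriv: "strict_mono_on {0<..} \<phi>'"
  unfolding strict_mono_on_def using deriv_less \<sigma>_pos by auto

lemma above_tangent:
  assumes "-\<sigma> < \<tau>" "-\<sigma> < t"
  shows "\<phi> \<tau> + \<phi>' \<tau> * (t - \<tau>) \<le> \<phi> t"
proof -
  obtain z where z: "z \<in> {min \<tau> t..max \<tau> t}" "(\<phi> t - \<phi> \<tau>) / (t - \<tau>) = \<phi>' z"
    if "t \<noteq> \<tau>"
    using MVT_difference_quotient[of "min \<tau> t" "max \<tau> t" \<phi> \<phi>' \<tau> t] has_deriv assms by force
  have quotient: "(\<phi> t - \<phi> \<tau>) / (t - \<tau>) * (t - \<tau>) = \<phi> t - \<phi> \<tau>" if "t \<noteq> \<tau>"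
    using that by simp
  consider "t < \<tau>" | "t = \<tau>" | "\<tau> < t" by linarith
  then show ?thesis
  proof cases
    case 1
    then have "\<phi>' z \<le> \<phi>' \<tau>" using z deriv_less[of z \<tau>] assms by force
    then have "\<phi>' \<tau> * (t - \<tau>) \<le> (\<phi> t - \<phi> \<tau>) / (t - \<tau>) * (t - \<tau>)"
      using 1 z by (intro mult_right_mono_neg) auto
    with 1 quotient show ?thesis by linarith
  next
    case 3
    then have "\<phi>' \<tau> \<le> \<phi>' z" using z deriv_less[of \<tau> z] assms by force
    then have "\<phi>' \<tau> * (t - \<tau>) \<le> (\<phi> t - \<phi> \<tau>) / (t - \<tau>) * (t - \<tau>)"
      using 3 z by (intro mult_right_mono) auto
    with 3 quotient show ?thesis by linarith
  qed simp
qed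

lemma legendre_at_deriv:
  assumes "\<tau> \<ge> 0"
  shows "legendre \<phi> (\<phi>' \<tau>) = ereal (\<phi>' \<tau> * \<tau> - \<phi> \<tau>)"
proof (rule antisym)
  show "legendre \<phi> (\<phi>' \<tau>) \<le> ereal (\<phi>' \<tau> * \<tau> - \<phi> \<tau>)"
    unfolding legendre_def
  proof (rule SUP_least)
    fix t :: real assume "t \<in> {0..}"
    then have "\<phi> \<tau> + \<phi>' \<tau> * (t - \<tau>) \<le> \<phi> t" using above_tangent assms \<sigma>_pos by auto
    then show "ereal (\<phi>' \<tau> * t - \<phi> t) \<le> ereal (\<phi>' \<tau> * \<tau> - \<phi> \<tau>)" by (simp add: algebra_simps)
  qed
qed (use legendre_lower_bound assms in auto)

lemma legendre_nonneg: "legendre \<phi> s \<ge> 0"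
  using legendre_lower_bound[of 0 s \<phi>] value_0 by (simp add: zero_ereal_def)

lemma deriv_at_touching_point:
  assumes le: "\<And>t. t > 0 \<Longrightarrow> \<phi> t \<le> m * t^2 / 2" and t1: "t1 > 0" and eq: "\<phi> t1 = m * t1^2 / 2"
  shows "\<phi>' t1 = m * t1"
proof -
  have "((\<lambda>t. m * t^2 / 2 - \<phi> t) has_real_derivative (m * (2 * t1) / 2 - \<phi>' t1)) (at t1)"
    using has_deriv[of t1] t1 \<sigma>_pos by (auto intro!: derivative_eq_intros)
  moreover have "\<forall>y. \<bar>t1 - y\<bar> < t1 \<longrightarrow> m * t1^2 / 2 - \<phi> t1 \<le> m * y^2 / 2 - \<phi> y"
  proof (intro allI impI)
    fix y assume "\<bar>t1 - y\<bar> < t1"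
    then have "y > 0" by linarith
    then show "m * t1^2 / 2 - \<phi> t1 \<le> m * y^2 / 2 - \<phi> y" using le[of y] eq by linarith
  qed
  ultimately have "m * (2 * t1) / 2 - \<phi>' t1 = 0" using DERIV_local_min t1 by blast
  then show ?thesis by simp
qed

lemma cgf_le_of_legendre_ratio:
  assumes t: "t > 0" and k: "k > 0"
    and ratio: "ereal k \<le> legendre \<phi> (\<phi>' t) / ereal ((\<phi>' t)^2/2)"
  shows "\<phi> t \<le> t^2 / (2*k)"
proof -
  define u where "u = \<phi>' t"
  have u: "u > 0" using deriv_pos t by (simp add: u_def)
  have "k \<le> (u * t - \<phi> t) / (u^2/2)"
    using ratio legendre_at_deriv[of t] t u by (simp add: u_def)
  then have "k * (u^2/2) \<le> u * t - \<phi> t" using u by (simp add: pos_le_divide_eq)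
  moreover have "0 \<le> (t - k * u)^2 / (2*k)" using k by simp
  moreover have "(t - k * u)^2 / (2*k) = t^2 / (2*k) - u * t + k * (u^2/2)"
    using k by (simp add: field_simps power2_eq_square)
  ultimately show ?thesis by linarith
qed

lemma cgf_ratio_gap:
  assumes m: "m > 0"
    and gap: "ereal (1/m) < (INF s\<in>B. legendre \<phi> s / ereal (s^2/2))"
    and A: "\<And>t. t \<in> A \<Longrightarrow> t > 0 \<and> \<phi>' t \<in> B"
  shows "(SUP t\<in>A. ereal (\<phi> t / (t^2/2))) < ereal m"
proof -
  obtain k where k: "ereal (1/m) < ereal k" "ereal k < (INF s\<in>B. legendre \<phi> s / ereal (s^2/2))"
    using ereal_dense2[OF gap] by auto
  have "1/m < k" using k(1) by simp
  moreover have "1/m > 0" using m by simp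
  ultimately have k_pos: "k > 0" by linarith
  have "1 < k * m" using \<open>1/m < k\<close> m by (simp add: field_simps)
  then have "1/k < m" using k_pos by (simp add: field_simps)
  have "(SUP t\<in>A. ereal (\<phi> t / (t^2/2))) \<le> ereal (1/k)"
  proof (rule SUP_least)
    fix t assume "t \<in> A"
    then have t: "t > 0" "\<phi>' t \<in> B" using A by auto
    have "ereal k \<le> legendre \<phi> (\<phi>' t) / ereal ((\<phi>' t)^2/2)"
      using less_imp_le[OF k(2)] INF_lower[OF t(2), of "\<lambda>s. legendre \<phi> s / ereal (s^2/2)"]
      by (rule order_trans)
    then have "\<phi> t \<le> t^2 / (2*k)" using cgf_le_of_legendre_ratio t(1) k_pos by blast
    then have "\<phi> t / (t^2/2) \<le> (t^2 / (2*k)) / (t^2/2)" using t(1) by (intro divide_right_mono) auto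
    also have "\<dots> = 1/k" using t(1) k_pos by (simp add: field_simps power2_eq_square)
    finally show "ereal (\<phi> t / (t^2/2)) \<le> ereal (1/k)" by simp
  qed
  also have "\<dots> < ereal m" using \<open>1/k < m\<close> by simp
  finally show ?thesis .
qed

lemma deriv_at_cond_a:
  assumes "cond_a \<phi> m ts"
  shows "\<phi>' ts = m * ts"
  using deriv_at_touching_point[OF cond_a_le[OF assms]] cond_a_touching_point[OF assms] by blast

lemma legendre_at_cond_a:
  assumes "cond_a \<phi> m ts"
  shows "legendre \<phi> (m * ts) = ereal (m * ts^2 / 2)"
  using legendre_at_deriv[of ts] deriv_at_cond_a[OF assms] cond_a_touching_point[OF assms]
  by (simp add: power2_eq_square algebra_simps)

lemma cond_a_imp_cond_b:
  assumes m: "m > 0" and a: "cond_a \<phi> m ts"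
  shows "cond_b (legendre \<phi>) m (m * ts)"
proof -
  have ts: "ts > 0" using cond_a_touching_point[OF a] by simp
  have gap: "(SUP t\<in>{0<..<ts-\<epsilon>}. ereal (\<phi> t / (t^2/2))) < ereal m"
      "(SUP t\<in>{ts+\<epsilon><..}. ereal (\<phi> t / (t^2/2))) < ereal m" if "\<epsilon> > 0" for \<epsilon>
    using a that unfolding cond_a_def by blast+
  have "legendre \<phi> (m * ts) / ereal ((m * ts)^2/2) = ereal (1/m)"
    using legendre_at_cond_a[OF a] m ts by (simp add: power2_eq_square)
  moreover have "ereal (1/m) < (INF s\<in>{0<..<m*ts-\<epsilon>}. legendre \<phi> s / ereal (s^2/2))"
    if "\<epsilon> > 0" for \<epsilon>
    by (rule legendre_ratio_gap[OF m gap(1)[of "\<epsilon>/m"]]) (use m that in \<open>auto simp: field_simps\<close>)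
  moreover have "ereal (1/m) < (INF s\<in>{m*ts+\<epsilon><..}. legendre \<phi> s / ereal (s^2/2))"
    if "\<epsilon> > 0" for \<epsilon>
  proof (rule legendre_ratio_gap[OF m gap(2)[of "\<epsilon>/m"]])
    fix s assume "s \<in> {m*ts+\<epsilon><..}"
    then have "s > m * ts + \<epsilon>" by simp
    moreover have "m * ts > 0" using m ts by simp
    moreover have "ts + \<epsilon>/m < s/m"
      using divide_strict_right_mono[OF \<open>s > m * ts + \<epsilon>\<close> m] m by (simp add: add_divide_distrib)
    ultimately show "s > 0 \<and> s/m \<in> {ts+\<epsilon>/m<..}" using that by auto
  qed (use m that in simp)
  ultimately show ?thesis using m ts unfolding cond_b_def by auto
qed

lemma legendre_at_cond_b:
  assumes m: "m > 0" and b: "cond_b (legendre \<phi>) m ss"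
  shows "legendre \<phi> ss = ereal (ss^2 / (2*m))"
proof -
  have ss: "ss > 0" and ratio: "legendre \<phi> ss / ereal (ss^2/2) = ereal (1/m)"
    using b unfolding cond_b_def by auto
  show ?thesis
  proof (cases "legendre \<phi> ss")
    case (real r)
    then have "r / (ss^2/2) = 1/m" using ratio ss by simp
    then show ?thesis using real ss m by (simp add: field_simps)
  next
    case PInf
    then show ?thesis using ratio by simp
  next
    case MInf
    then show ?thesis using legendre_nonneg[of ss] by simp
  qed
qed

lemma cgf_le_of_cond_b:
  assumes m: "m > 0" and b: "cond_b (legendre \<phi>) m ss" and t: "t > 0"
  shows "\<phi> t \<le> m * t^2 / 2"
  using cgf_le_of_legendre_ratio[OF t, of "1/m"] cond_b_ge[OF b deriv_pos[OF t]] m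
  by (simp add: ac_simps)

lemma cond_b_touching_point:
  assumes m: "m > 0" and b: "cond_b (legendre \<phi>) m ss"
  shows "\<phi> (ss/m) = m * (ss/m)^2 / 2" "\<phi>' (ss/m) = ss"
proof -
  define t1 where "t1 = ss / m"
  have t1: "t1 > 0" using b m unfolding cond_b_def t1_def by simp
  have "ss * t1 - \<phi> t1 \<le> ss^2 / (2*m)"
    using legendre_lower_bound[of t1 ss \<phi>] t1 legendre_at_cond_b[OF m b] by simp
  moreover have "ss * t1 - m * t1^2 / 2 = ss^2 / (2*m)"
    using m by (simp add: t1_def field_simps power2_eq_square)
  ultimately show touching: "\<phi> (ss/m) = m * (ss/m)^2 / 2"
    using cgf_le_of_cond_b[OF m b t1] unfolding t1_def by linarith
  show "\<phi>' (ss/m) = ss"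
    using deriv_at_touching_point[OF cgf_le_of_cond_b[OF m b] t1[unfolded t1_def] touching] m
    by simp
qed

lemma cond_b_imp_cond_a:
  assumes m: "m > 0" and b: "cond_b (legendre \<phi>) m ss"
  shows "cond_a \<phi> m (ss / m)"
proof -
  define t1 where "t1 = ss / m"
  have t1: "t1 > 0" using b m unfolding cond_b_def t1_def by simp
  have touching: "\<phi> t1 = m * t1^2 / 2" and deriv: "\<phi>' t1 = ss"
    using cond_b_touching_point[OF m b] unfolding t1_def by auto
  have gap: "ereal (1/m) < (INF s\<in>{0<..<ss-\<epsilon>}. legendre \<phi> s / ereal (s^2/2))"
      "ereal (1/m) < (INF s\<in>{ss+\<epsilon><..}. legendre \<phi> s / ereal (s^2/2))" if "\<epsilon> > 0" for \<epsilon>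
    using b that unfolding cond_b_def by blast+
  have "(SUP t\<in>{0<..<t1-\<epsilon>}. ereal (\<phi> t / (t^2/2))) < ereal m" if "\<epsilon> > 0" for \<epsilon>
  proof -
    \<comment> \<open>the \<open>max\<close> keeps \<open>a\<close> inside \<open>(0, t1)\<close> even when \<open>t1 - \<epsilon> \<le> 0\<close>\<close>
    define a where "a = max (t1 - \<epsilon>) (t1/2)"
    have a: "0 < a" "a < t1" using t1 that by (auto simp: a_def)
    then have "\<phi>' a < ss" using deriv_less[of a t1] \<sigma>_pos deriv by simp
    show ?thesis
    proof (rule cgf_ratio_gap[OF m])
      show "ereal (1/m) < (INF s\<in>{0<..<\<phi>' a}. legendre \<phi> s / ereal (s^2/2))"
        using gap(1)[of "ss - \<phi>' a"] \<open>\<phi>' a < ss\<close> by simp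
      fix t assume "t \<in> {0<..<t1-\<epsilon>}"
      then show "t > 0 \<and> \<phi>' t \<in> {0<..<\<phi>' a}"
        using deriv_pos[of t] deriv_less[of t a] \<sigma>_pos by (auto simp: a_def)
    qed
  qed
  moreover have "(SUP t\<in>{t1+\<epsilon><..}. ereal (\<phi> t / (t^2/2))) < ereal m" if "\<epsilon> > 0" for \<epsilon>
  proof -
    have "ss < \<phi>' (t1 + \<epsilon>)" using deriv_less[of t1 "t1 + \<epsilon>"] t1 \<sigma>_pos deriv that by simp
    show ?thesis
    proof (rule cgf_ratio_gap[OF m])
      show "ereal (1/m) < (INF s\<in>{\<phi>' (t1 + \<epsilon>)<..}. legendre \<phi> s / ereal (s^2/2))"
        using gap(2)[of "\<phi>' (t1 + \<epsilon>) - ss"] \<open>ss < \<phi>' (t1 + \<epsilon>)\<close> by simp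
      fix t assume "t \<in> {t1+\<epsilon><..}"
      then show "t > 0 \<and> \<phi>' t \<in> {\<phi>' (t1 + \<epsilon>)<..}"
        using deriv_less[of "t1 + \<epsilon>" t] t1 that \<sigma>_pos by auto
    qed
  qed
  ultimately show ?thesis
    using t1 touching unfolding cond_a_def t1_def[symmetric] by (auto simp: field_simps)
qed

lemma cond_a_cond_b_scale:
  assumes m: "m > 0" and a: "cond_a \<phi> m ts" and b: "cond_b (legendre \<phi>) m ss"
  shows "ss = m * ts"
proof (rule ccontr)
  assume "ss \<noteq> m * ts"
  moreover have "m * ts > 0" using m cond_a_touching_point[OF a] by simp
  ultimately have "ereal (1/m) < legendre \<phi> (m * ts) / ereal ((m * ts)^2/2)"
    using cond_b_greater[OF b] by auto
  moreover have "legendre \<phi> (m * ts) / ereal ((m * ts)^2/2) = ereal (1/m)"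
    using cond_a_imp_cond_b[OF m a] unfolding cond_b_def by blast
  ultimately show False by simp
qed

lemma deriv_has_second_deriv:
  assumes "t > -\<sigma>"
  shows "(deriv \<phi> has_real_derivative \<phi>'' t) (at t)"
proof (rule has_field_derivative_transform_within_open[where S="{-\<sigma><..}", OF has_second_deriv])
  show "\<phi>' x = deriv \<phi> x" if "x \<in> {-\<sigma><..}" for x
    using has_deriv[of x] that by (simp add: DERIV_imp_deriv)
qed (use assms in auto)

lemma deriv_local_inverse:
  assumes t0: "t0 > 0"
  obtains a b \<tau> where "a < \<phi>' t0" "\<phi>' t0 < b" "\<tau> (\<phi>' t0) = t0"
    "\<And>s. s \<in> {a<..<b} \<Longrightarrow>
       \<tau> s > 0 \<and> \<phi>' (\<tau> s) = s \<and> (\<tau> has_real_derivative inverse (\<phi>'' (\<tau> s))) (at s)"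
proof -
  define \<tau> where "\<tau> = inv_into {0<..} \<phi>'"
  have \<tau>_left_inverse: "\<tau> (\<phi>' t) = t" if "t > 0" for t
    using strict_mono_on_imp_inj_on[OF strict_mono_on_deriv] that by (simp add: \<tau>_def)
  have cont: "isCont \<phi>' t" if "t > -\<sigma>" for t
    using has_second_deriv[OF that] by (rule DERIV_isCont)
  define a where "a = \<phi>' (t0/2)"
  define b where "b = \<phi>' (2*t0)"
  have ab: "a < \<phi>' t0" "\<phi>' t0 < b" using deriv_less t0 \<sigma>_pos by (auto simp: a_def b_def)
  have range: "\<tau> s > 0 \<and> \<phi>' (\<tau> s) = s" if s: "a < s" "s < b" for s
  proof -
    obtain t where "t0/2 \<le> t" "t \<le> 2*t0" "\<phi>' t = s"
      using IVT[of \<phi>' "t0/2" s "2*t0"] s cont t0 \<sigma>_pos by (auto simp: a_def b_def)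
    then show ?thesis using \<tau>_left_inverse[of t] t0 by auto
  qed
  have \<tau>_has_deriv: "(\<tau> has_real_derivative inverse (\<phi>'' (\<tau> s))) (at s)" if s: "a < s" "s < b" for s
  proof (rule DERIV_inverse_function[where f=\<phi>' and g=\<tau> and x=s and a=a and b=b])
    have \<tau>s: "\<tau> s > 0" using range[OF s] by simp
    show "(\<phi>' has_real_derivative \<phi>'' (\<tau> s)) (at (\<tau> s))" "\<phi>'' (\<tau> s) \<noteq> 0"
      using has_second_deriv second_deriv_pos \<tau>s \<sigma>_pos by (auto simp: less_imp_neq[symmetric])
    show "\<And>y. a < y \<Longrightarrow> y < b \<Longrightarrow> \<phi>' (\<tau> y) = y" using range by blast
    have "isCont \<tau> (\<phi>' (\<tau> s))"
    proof (rule isCont_inverse_function[where f=\<phi>' and g=\<tau> and x="\<tau> s" and d="\<tau> s / 2"])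
      show "\<tau> (\<phi>' z) = z" "isCont \<phi>' z" if "\<bar>z - \<tau> s\<bar> \<le> \<tau> s / 2" for z
        using \<tau>_left_inverse[of z] cont[of z] abs_le_D2[OF that] \<tau>s \<sigma>_pos by simp_all
    qed (use \<tau>s in simp)
    then show "isCont \<tau> s" using range[OF s] by simp
  qed (use s in auto)
  show ?thesis
  proof (rule that)
    show "a < \<phi>' t0" "\<phi>' t0 < b" by (fact ab)+
    show "\<tau> (\<phi>' t0) = t0" by (rule \<tau>_left_inverse[OF t0])
    show "\<tau> s > 0 \<and> \<phi>' (\<tau> s) = s \<and> (\<tau> has_real_derivative inverse (\<phi>'' (\<tau> s))) (at s)"
      if "s \<in> {a<..<b}" for s
      using range[of s] \<tau>_has_deriv[of s] that by simp
  qed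
qed

lemma legendre_locally_smooth:
  assumes t0: "t0 > 0"
  obtains J where "\<forall>\<^sub>F s in nhds (\<phi>' t0). legendre \<phi> s = ereal (J s)"
    "(J has_real_derivative t0) (at (\<phi>' t0))"
    "(deriv J has_real_derivative inverse (\<phi>'' t0)) (at (\<phi>' t0))"
proof -
  obtain a b \<tau> where ab: "a < \<phi>' t0" "\<phi>' t0 < b" and \<tau>_t0: "\<tau> (\<phi>' t0) = t0"
    and \<tau>: "\<And>s. s \<in> {a<..<b} \<Longrightarrow>
      \<tau> s > 0 \<and> \<phi>' (\<tau> s) = s \<and> (\<tau> has_real_derivative inverse (\<phi>'' (\<tau> s))) (at s)"
    by (rule deriv_local_inverse[OF t0]) blast
  define J where "J s = s * \<tau> s - \<phi> (\<tau> s)" for s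
  have legendre_J: "legendre \<phi> s = ereal (J s)" if "s \<in> {a<..<b}" for s
    using legendre_at_deriv[of "\<tau> s"] \<tau>[OF that] by (simp add: J_def)
  have J_deriv: "(J has_real_derivative \<tau> s) (at s)" if "s \<in> {a<..<b}" for s
  proof -
    have \<tau>s: "\<tau> s > 0" "\<phi>' (\<tau> s) = s"
      and d\<tau>: "(\<tau> has_real_derivative inverse (\<phi>'' (\<tau> s))) (at s)"
      using \<tau>[OF that] by auto
    have "((\<lambda>x. x * \<tau> x) has_real_derivative 1 * \<tau> s + inverse (\<phi>'' (\<tau> s)) * s) (at s)"
      by (rule DERIV_mult[OF DERIV_ident d\<tau>])
    moreover have "((\<lambda>x. \<phi> (\<tau> x)) has_real_derivative \<phi>' (\<tau> s) * inverse (\<phi>'' (\<tau> s))) (at s)"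
      by (rule DERIV_chain2[OF has_deriv d\<tau>]) (use \<tau>s \<sigma>_pos in simp)
    ultimately have "((\<lambda>x. x * \<tau> x - \<phi> (\<tau> x)) has_real_derivative
        1 * \<tau> s + inverse (\<phi>'' (\<tau> s)) * s - \<phi>' (\<tau> s) * inverse (\<phi>'' (\<tau> s))) (at s)"
      by (rule DERIV_diff)
    then show ?thesis using \<tau>s by (simp add: J_def[abs_def] mult.commute)
  qed
  show ?thesis
  proof (rule that)
    show "\<forall>\<^sub>F s in nhds (\<phi>' t0). legendre \<phi> s = ereal (J s)"
      unfolding eventually_nhds using ab legendre_J by (intro exI[of _ "{a<..<b}"]) auto
    show "(J has_real_derivative t0) (at (\<phi>' t0))" using J_deriv[of "\<phi>' t0"] ab \<tau>_t0 by simp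
    show "(deriv J has_real_derivative inverse (\<phi>'' t0)) (at (\<phi>' t0))"
    proof (rule has_field_derivative_transform_within_open[where S="{a<..<b}"])
      show "(\<tau> has_real_derivative inverse (\<phi>'' t0)) (at (\<phi>' t0))"
        using \<tau>[of "\<phi>' t0"] ab \<tau>_t0 by simp
      show "\<tau> s = deriv J s" if "s \<in> {a<..<b}" for s
        using J_deriv[OF that] by (simp add: DERIV_imp_deriv)
    qed (use ab in auto)
  qed
qed

lemma cond_a_cond_b_relations:
  assumes m: "m > 0" and a: "cond_a \<phi> m ts" and b: "cond_b (legendre \<phi>) m ss"
  shows "legendre \<phi> ss = ereal (\<phi> ts) \<and> \<phi> ts = ss * ts / 2 \<and>
    (\<phi> has_real_derivative ss) (at ts) \<and> ss = ts * m \<and>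
    (\<exists>J. (\<forall>\<^sub>F s in nhds ss. legendre \<phi> s = ereal (J s)) \<and>
      (J has_real_derivative ts) (at ss) \<and> ts = ss / m \<and>
      (\<exists>I2 \<phi>2. (deriv J has_real_derivative I2) (at ss) \<and>
        (deriv \<phi> has_real_derivative \<phi>2) (at ts) \<and> I2 * \<phi>2 = 1))"
proof -
  have ts: "ts > 0" and at_ts: "\<phi> ts = m * ts^2 / 2" using cond_a_touching_point[OF a] by auto
  have ss: "ss = m * ts" by (rule cond_a_cond_b_scale[OF m a b])
  have deriv: "\<phi>' ts = ss" using deriv_at_cond_a[OF a] ss by simp
  obtain J where "\<forall>\<^sub>F s in nhds ss. legendre \<phi> s = ereal (J s)" "(J has_real_derivative ts) (at ss)"
    "(deriv J has_real_derivative inverse (\<phi>'' ts)) (at ss)"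
    by (rule legendre_locally_smooth[OF ts, unfolded deriv])
  moreover have "(deriv \<phi> has_real_derivative \<phi>'' ts) (at ts)"
    using deriv_has_second_deriv ts \<sigma>_pos by simp
  moreover have "inverse (\<phi>'' ts) * \<phi>'' ts = 1"
    using second_deriv_pos[of ts] ts \<sigma>_pos by simp
  moreover have "ts = ss / m" using ss m by simp
  ultimately have "\<exists>J. (\<forall>\<^sub>F s in nhds ss. legendre \<phi> s = ereal (J s)) \<and>
      (J has_real_derivative ts) (at ss) \<and> ts = ss / m \<and>
      (\<exists>I2 \<phi>2. (deriv J has_real_derivative I2) (at ss) \<and>
        (deriv \<phi> has_real_derivative \<phi>2) (at ts) \<and> I2 * \<phi>2 = 1)"
    by blast
  moreover have "legendre \<phi> ss = ereal (\<phi> ts)"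
    using legendre_at_cond_a[OF a] at_ts ss by simp
  moreover have "\<phi> ts = ss * ts / 2" using at_ts ss by (simp add: power2_eq_square)
  moreover have "(\<phi> has_real_derivative ss) (at ts)" using has_deriv[of ts] ts \<sigma>_pos deriv by simp
  moreover have "ss = ts * m" using ss by simp
  ultimately show ?thesis by blast
qed

end

section \<open>Exponential moments\<close>

lemma power_le_exp:
  fixes z :: real assumes "z \<ge> 0"
  shows "z^n \<le> real n ^ n * exp z"
proof (cases "n = 0")
  case False
  then have n: "real n > 0" by simp
  have "(z / real n)^n \<le> (1 + z / real n)^n"
    using assms n by (intro power_mono) auto
  also have "\<dots> \<le> exp z" using exp_ge_one_plus_x_over_n_power_n[where x=z and n=n] assms False by simp
  finally show ?thesis using n by (simp add: power_divide field_simps)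
qed (use assms in simp)

lemma exp_mult_le_exp_endpoints:
  fixes a b t y :: real assumes "t \<in> {a..b}"
  shows "exp (t * y) \<le> exp (b * y) + exp (a * y)"
proof (cases "y \<ge> 0")
  case True
  then have "exp (t * y) \<le> exp (b * y)" using assms by (auto intro: mult_right_mono)
  then show ?thesis by (simp add: add_increasing2)
next
  case False
  then have "exp (t * y) \<le> exp (a * y)" using assms by (auto intro: mult_right_mono_neg)
  then show ?thesis by (simp add: add_increasing)
qed

lemma abs_power_mult_exp_le:
  fixes y t \<eta> :: real assumes \<eta>: "\<eta> > 0"
  shows "\<bar>y\<bar>^n * exp (t * y) \<le> (real n / \<eta>)^n * (exp ((t + \<eta>) * y) + exp ((t - \<eta>) * y))"
proof -
  have "(\<eta> * \<bar>y\<bar>)^n \<le> real n ^ n * exp (\<eta> * \<bar>y\<bar>)" using \<eta> by (intro power_le_exp) auto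
  then have "\<bar>y\<bar>^n \<le> (real n / \<eta>)^n * exp (\<eta> * \<bar>y\<bar>)"
    using \<eta> by (simp add: power_mult_distrib power_divide field_simps)
  then have "\<bar>y\<bar>^n * exp (t * y) \<le> (real n / \<eta>)^n * exp (\<eta> * \<bar>y\<bar> + t * y)"
    by (simp add: exp_add mult_right_mono mult.assoc)
  also have "exp (\<eta> * \<bar>y\<bar> + t * y) \<le> exp ((t + \<eta>) * y) + exp ((t - \<eta>) * y)"
  proof (cases "y \<ge> 0")
    case True
    then show ?thesis by (simp add: algebra_simps add_increasing2)
  next
    case False
    then show ?thesis by (simp add: algebra_simps add_increasing)
  qed
  then have "(real n / \<eta>)^n * exp (\<eta> * \<bar>y\<bar> + t * y)
      \<le> (real n / \<eta>)^n * (exp ((t + \<eta>) * y) + exp ((t - \<eta>) * y))"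
    using \<eta> by (intro mult_left_mono) auto
  finally show ?thesis .
qed

locale exp_moments = prob_space M for M :: "'a measure" +
  fixes X :: "'a \<Rightarrow> real" and \<sigma> :: real
  assumes X_measurable[measurable]: "X \<in> borel_measurable M"
    and \<sigma>_pos: "\<sigma> > 0"
    and integrable_exp: "\<And>t. t \<ge> -\<sigma> \<Longrightarrow> integrable M (\<lambda>x. exp (t * X x))"
    and expectation_X: "expectation X = 0"
    and variance_X: "variance X = 1"
begin

definition moment_exp :: "nat \<Rightarrow> real \<Rightarrow> real" where
  "moment_exp n t = (\<integral>x. X x ^ n * exp (t * X x) \<partial>M)"

lemma cgf_eq_ln_moment_exp: "cgf M X = (\<lambda>t. ln (moment_exp 0 t))"
  by (rule ext) (simp add: cgf_def moment_exp_def)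

lemma integrable_moment_exp:
  assumes "t > -\<sigma>"
  shows "integrable M (\<lambda>x. X x ^ n * exp (t * X x))"
proof (rule Bochner_Integration.integrable_bound)
  define \<eta> where "\<eta> = (t + \<sigma>) / 2"
  have \<eta>: "\<eta> > 0" "t - \<eta> \<ge> -\<sigma>" "t + \<eta> \<ge> -\<sigma>" using assms by (auto simp: \<eta>_def field_simps)
  show "integrable M (\<lambda>x. (real n / \<eta>)^n * (exp ((t + \<eta>) * X x) + exp ((t - \<eta>) * X x)))"
    using integrable_exp \<eta> by auto
  show "AE x in M. norm (X x ^ n * exp (t * X x))
      \<le> norm ((real n / \<eta>)^n * (exp ((t + \<eta>) * X x) + exp ((t - \<eta>) * X x)))"
    using abs_power_mult_exp_le[OF \<eta>(1)] \<eta>(1) by (simp add: abs_mult power_abs)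
qed measurable

lemma has_real_derivative_moment_exp:
  assumes t0: "t0 > -\<sigma>"
  shows "(moment_exp n has_real_derivative moment_exp (Suc n) t0) (at t0)"
proof -
  define \<delta> where "\<delta> = (t0 + \<sigma>) / 2"
  have \<delta>: "\<delta> > 0" "t0 - \<delta> > -\<sigma>" "t0 + \<delta> > -\<sigma>" using t0 by (auto simp: \<delta>_def field_simps)
  define G where
    "G x = \<bar>X x\<bar> ^ Suc n * exp ((t0 + \<delta>) * X x) + \<bar>X x\<bar> ^ Suc n * exp ((t0 - \<delta>) * X x)" for x
  have "((\<lambda>t. \<integral>x. X x ^ n * exp (t * X x) \<partial>M) has_real_derivative
      (\<integral>x. X x ^ Suc n * exp (t0 * X x) \<partial>M)) (at t0)"
  proof (rule has_real_derivative_integral[where G=G, OF \<delta>(1)])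
    show "integrable M (\<lambda>x. X x ^ n * exp (t * X x))" if "t \<in> {t0-\<delta>..t0+\<delta>}" for t
      using integrable_moment_exp that \<delta> by simp
    show "integrable M G"
      using integrable_abs[OF integrable_moment_exp[OF \<delta>(3), of "Suc n"]]
        integrable_abs[OF integrable_moment_exp[OF \<delta>(2), of "Suc n"]]
      unfolding G_def by (simp add: abs_mult power_abs)
    show "((\<lambda>t. X x ^ n * exp (t * X x)) has_real_derivative X x ^ Suc n * exp (t * X x)) (at t)"
      for x t
      by (auto intro!: derivative_eq_intros simp: algebra_simps)
    show "\<bar>X x ^ Suc n * exp (t * X x)\<bar> \<le> G x" if "t \<in> {t0-\<delta>..t0+\<delta>}" for x t
      using mult_left_mono[OF exp_mult_le_exp_endpoints[OF that, of "X x"], of "\<bar>X x\<bar> ^ Suc n"]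
      by (simp add: G_def abs_mult power_abs algebra_simps)
  qed measurable
  then show ?thesis unfolding moment_exp_def[abs_def] .
qed

lemma moment_exp_0_pos:
  assumes "t > -\<sigma>"
  shows "moment_exp 0 t > 0"
proof -
  have integrable: "integrable M (\<lambda>x. exp (t * X x))" using integrable_exp assms by simp
  have "moment_exp 0 t \<ge> 0" unfolding moment_exp_def by simp
  moreover have "moment_exp 0 t \<noteq> 0"
  proof
    assume "moment_exp 0 t = 0"
    then have "AE x in M. exp (t * X x) = 0"
      using integral_nonneg_eq_0_iff_AE[OF integrable] unfolding moment_exp_def by simp
    then show False by simp
  qed
  ultimately show ?thesis by simp
qed

lemma moment_exp_1_squared_less:
  assumes t: "t > -\<sigma>"
  shows "moment_exp 1 t ^ 2 < moment_exp 2 t * moment_exp 0 t"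
proof -
  let ?m = "\<lambda>n. moment_exp n t"
  define c where "c = ?m 1 / ?m 0"
  define Q where "Q = (\<integral>x. (X x - c)^2 * exp (t * X x) \<partial>M)"
  have m0: "?m 0 > 0" using moment_exp_0_pos t by simp
  have integrable: "integrable M (\<lambda>x. X x ^ n * exp (t * X x))" for n
    using integrable_moment_exp t by simp
  have expand: "(\<lambda>x. (X x - c)^2 * exp (t * X x)) = (\<lambda>x.
      (X x ^ 2 * exp (t * X x) - (2*c) * (X x ^ 1 * exp (t * X x))) + c^2 * (X x ^ 0 * exp (t * X x)))"
    by (rule ext) (simp add: power2_eq_square algebra_simps)
  have integrable_Q: "integrable M (\<lambda>x. (X x - c)^2 * exp (t * X x))"
    unfolding expand using integrable[of 0] integrable[of 1] integrable[of 2] by simp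
  have "Q = ?m 2 - 2*c * ?m 1 + c^2 * ?m 0"
    unfolding Q_def expand moment_exp_def using integrable[of 0] integrable[of 1] integrable[of 2] by simp
  then have variance_form: "?m 2 * ?m 0 - ?m 1 ^ 2 = ?m 0 * Q"
    using m0 unfolding c_def by (simp add: field_simps power2_eq_square)
  have "Q \<ge> 0" unfolding Q_def by simp
  moreover have "Q \<noteq> 0"
  proof
    assume "Q = 0"
    then have "AE x in M. (X x - c)^2 * exp (t * X x) = 0"
      using integral_nonneg_eq_0_iff_AE[OF integrable_Q] unfolding Q_def by simp
    then have X_const: "AE x in M. X x = c" by eventually_elim simp
    then have "c = 0"
      using integral_cong_AE[of X M "\<lambda>_. c"] expectation_X prob_space by simp
    then have "variance X = 0"
      using X_const expectation_X by (simp add: integral_cong_AE[of _ M "\<lambda>_. 0"])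
    then show False using variance_X by simp
  qed
  ultimately have "?m 0 * Q > 0" using m0 by simp
  then show ?thesis using variance_form by linarith
qed

lemma convex_cgf_cgf:
  "convex_cgf (cgf M X) (\<lambda>t. moment_exp 1 t / moment_exp 0 t)
     (\<lambda>t. (moment_exp 2 t * moment_exp 0 t - moment_exp 1 t ^ 2) / moment_exp 0 t ^ 2) \<sigma>"
proof
  fix t :: real assume t: "t > -\<sigma>"
  have m0: "moment_exp 0 t > 0" using moment_exp_0_pos t by simp
  show "(cgf M X has_real_derivative moment_exp 1 t / moment_exp 0 t) (at t)"
    unfolding cgf_eq_ln_moment_exp
    using DERIV_chain2[OF DERIV_ln_divide[OF m0] has_real_derivative_moment_exp[OF t]] by simp
  show "((\<lambda>t. moment_exp 1 t / moment_exp 0 t) has_real_derivative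
      (moment_exp 2 t * moment_exp 0 t - moment_exp 1 t ^ 2) / moment_exp 0 t ^ 2) (at t)"
    using DERIV_divide[OF has_real_derivative_moment_exp[OF t] has_real_derivative_moment_exp[OF t]] m0
    by (simp add: power2_eq_square numeral_2_eq_2)
  show "(moment_exp 2 t * moment_exp 0 t - moment_exp 1 t ^ 2) / moment_exp 0 t ^ 2 > 0"
    using moment_exp_1_squared_less[OF t] m0 by simp
next
  have "moment_exp 0 0 = 1" by (simp add: moment_exp_def prob_space)
  then show "cgf M X 0 = 0" "moment_exp 1 0 / moment_exp 0 0 = 0"
    using expectation_X by (simp_all add: cgf_eq_ln_moment_exp moment_exp_def)
qed (fact \<sigma>_pos)

end

theorem proposition5p1:
  fixes M :: "'a measure" and X :: "'a \<Rightarrow> real" and \<sigma>0 mstar :: real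
  assumes "prob_space M"
    and "X \<in> borel_measurable M"
    and "integrable M X"
    and "prob_space.expectation M X = 0"
    and "prob_space.variance M X = 1"
    and "\<sigma>0 > 0"
    and "\<forall>t\<ge>-\<sigma>0. integrable M (\<lambda>x. exp (t * X x))"
    and "mstar > 1"
  shows "((\<exists>ts. cond_a (cgf M X) mstar ts) \<longleftrightarrow> (\<exists>ss. cond_b (rate M X) mstar ss)) \<and>
         (\<forall>ts ss. cond_a (cgf M X) mstar ts \<and> cond_b (rate M X) mstar ss \<longrightarrow>
           rate M X ss = ereal (cgf M X ts) \<and> cgf M X ts = ss * ts / 2 \<and>
           (cgf M X has_real_derivative ss) (at ts) \<and> ss = ts * mstar \<and>
           (\<exists>J. (\<forall>\<^sub>F s in nhds ss. rate M X s = ereal (J s)) \<and>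
                (J has_real_derivative ts) (at ss) \<and> ts = ss / mstar \<and>
                (\<exists>I2 \<phi>2. (deriv J has_real_derivative I2) (at ss) \<and>
                          (deriv (cgf M X) has_real_derivative \<phi>2) (at ts) \<and>
                          I2 * \<phi>2 = 1)))"
proof -
  interpret exp_moments M X \<sigma>0
    using assms unfolding exp_moments_def exp_moments_axioms_def by auto
  interpret convex_cgf "cgf M X" "\<lambda>t. moment_exp 1 t / moment_exp 0 t"
    "\<lambda>t. (moment_exp 2 t * moment_exp 0 t - moment_exp 1 t ^ 2) / moment_exp 0 t ^ 2" \<sigma>0
    by (rule convex_cgf_cgf)
  have m: "mstar > 0" using assms(8) by simp
  show ?thesis
    unfolding rate_eq_legendre
    using cond_a_imp_cond_b[OF m] cond_b_imp_cond_a[OF m] cond_a_cond_b_relations[OF m] by blast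
qed

end
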